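(* Consider a cellular network with $n$ base stations $\mathcal{N}=\{1,\dots,n\}$, base station $i$ serving a nonempty set $\mathcal{J}_i$ of users (pairwise disjoint), channel gains $g_{kj}>0$, noise power $\sigma^2>0$, and $$f_i(\mathbf{x};\mathbf{r},\mathbf{p})=\sum_{j\in\mathcal{J}_i}\frac{r_{ij}}{\log\Big(1+\frac{p_i g_{ij}}{\sum_{k\ne i} p_k g_{kj} x_k+\sigma^2}\Big)}.$$ Fix strictly positive $\mathbf{x}$ and $\mathbf{r}$. Then for every $i\in\mathcal{N}$ there exists a function $h_i(\cdot;\mathbf{x},\mathbf{r}):\mathbb{R}^{n-1}_{++}\to\mathbb{R}_{++}$ such that for every $\bar{\mathbf{p}}_i\in\mathbb{R}^{n-1}_{++}$, $p_i=h_i(\bar{\mathbf{p}}_i;\mathbf{x},\mathbf{r})$ is the unique $p_i>0$ with $x_i=f_i(\mathbf{x};\mathbf{r},\mathbf{p})$. In particular, if strictly positive $\mathbf{p},\mathbf{x},\mathbf{r}$ satisfy $\mathbf{x}=\mathbf{f}(\mathbf{x};\mathbf{r},\mathbf{p})$, then $p_i=h_i(\bar{\mathbf{p}}_i;\mathbf{x},\mathbf{r})$ for all $i=1,\dots,n$, i.e., in vector form $\mathbf{p}=\mathbf{h}(\mathbf{p};\mathbf{x},\mathbf{r})$.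
   Context: $\log$ is natural logarithm; $\mathbb{R}_{++}$ denotes positive reals. For a vector $\mathbf{p}\in\mathbb{R}^n$, $\bar{\mathbf{p}}_i\in\mathbb{R}^{n-1}$ is $\mathbf{p}$ with its $i$th component removed (note $f_i$ depends on $\mathbf{p}$ only through $p_i$ and $\bar{\mathbf{p}}_i$). $\mathbf{h}(\mathbf{p};\mathbf{x},\mathbf{r})=(h_1(\bar{\mathbf{p}}_1;\mathbf{x},\mathbf{r}),\dots,h_n(\bar{\mathbf{p}}_n;\mathbf{x},\mathbf{r}))^T$. *)

theory Defs
  imports Complex_Main
begin

text \<open>Base stations are the elements of a finite type 'n (so N = UNIV, n = CARD('n)),
  users are elements of a type 'u; J i is the set of users served by station i;
  g k j is the channel gain from station k to user j; sigma2 is the noise power.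
  f_i(x; r, p) as in the paper (log = natural logarithm ln).\<close>

definition fcell ::
  "('n::finite \<Rightarrow> 'u set) \<Rightarrow> ('n \<Rightarrow> 'u \<Rightarrow> real) \<Rightarrow> real \<Rightarrow> 'n
    \<Rightarrow> ('n \<Rightarrow> real) \<Rightarrow> ('n \<Rightarrow> 'u \<Rightarrow> real) \<Rightarrow> ('n \<Rightarrow> real) \<Rightarrow> real" where
  "fcell J g sigma2 i x r p =
     (\<Sum>j\<in>J i. r i j /
        ln (1 + p i * g i j / ((\<Sum>k\<in>UNIV - {i}. p k * g k j * x k) + sigma2)))"

end

theory Submission
  imports Defs "HOL-Real_Asymp.Real_Asymp"
begin

text \<open>With all other powers fixed, the interference-plus-noise term in the SINR of every user
  of station i does not depend on p_i, so f_i is a function of p_i alone of the form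
  F(t) = sum_j r_j / ln (1 + t c_j) with r_j, c_j > 0. Each summand decreases strictly and
  continuously from +infinity (as t tends to 0 from the right) to 0 (as t tends to infinity), so F
  attains every positive value x_i exactly once. Choosing that point defines h_i; a fixed point
  p = f(x; r, p) must then have p_i = h_i(p with p_i removed) by uniqueness.\<close>

lemma sum_inverse_ln_strict_antimono:
  fixes A :: "'u set" and r c :: "'u \<Rightarrow> real"
  assumes "finite A" "A \<noteq> {}" "\<And>j. j \<in> A \<Longrightarrow> r j > 0" "\<And>j. j \<in> A \<Longrightarrow> c j > 0"
    and "0 < s" "s < t"
  shows "(\<Sum>j\<in>A. r j / ln (1 + t * c j)) < (\<Sum>j\<in>A. r j / ln (1 + s * c j))"
proof (rule sum_strict_mono[OF assms(1,2)])
  fix j assume j: "j \<in> A"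
  have sc: "0 < s * c j" "s * c j < t * c j" using assms(4-6) j by simp_all
  then have "0 < ln (1 + s * c j)" "ln (1 + s * c j) < ln (1 + t * c j)" by simp_all
  then show "r j / ln (1 + t * c j) < r j / ln (1 + s * c j)"
    using assms(3) j by (simp add: divide_strict_left_mono mult_pos_pos)
qed

lemma sum_inverse_ln_tendsto_zero:
  fixes A :: "'u set" and r c :: "'u \<Rightarrow> real"
  assumes "\<And>j. j \<in> A \<Longrightarrow> c j > 0"
  shows "((\<lambda>t. \<Sum>j\<in>A. r j / ln (1 + t * c j)) \<longlongrightarrow> 0) at_top"
proof -
  have "((\<lambda>t. \<Sum>j\<in>A. r j / ln (1 + t * c j)) \<longlongrightarrow> (\<Sum>j\<in>A. 0)) at_top"
  proof (rule tendsto_sum)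
    fix j assume "j \<in> A"
    with assms have "c j > 0" .
    then show "((\<lambda>t. r j / ln (1 + t * c j)) \<longlongrightarrow> 0) at_top" by real_asymp
  qed
  then show ?thesis by simp
qed

lemma sum_inverse_ln_at_right_zero:
  fixes A :: "'u set" and r c :: "'u \<Rightarrow> real"
  assumes "finite A" "A \<noteq> {}" "\<And>j. j \<in> A \<Longrightarrow> r j > 0" "\<And>j. j \<in> A \<Longrightarrow> c j > 0"
  shows "filterlim (\<lambda>t. \<Sum>j\<in>A. r j / ln (1 + t * c j)) at_top (at_right 0)"
proof -
  obtain j0 where j0: "j0 \<in> A" using assms(2) by blast
  have "r j0 > 0" "c j0 > 0" using assms(3,4) j0 by auto
  then have "filterlim (\<lambda>t. r j0 / ln (1 + t * c j0)) at_top (at_right 0)" by real_asymp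
  moreover have "eventually (\<lambda>t. r j0 / ln (1 + t * c j0) \<le> (\<Sum>j\<in>A. r j / ln (1 + t * c j)))
      (at_right 0)"
    using eventually_at_right_less[of 0]
  proof eventually_elim
    case (elim t)
    show ?case
    proof (rule member_le_sum[OF j0 _ assms(1)])
      fix j assume "j \<in> A - {j0}"
      then have "t * c j > 0" "r j > 0" using assms(3,4) elim by auto
      then show "0 \<le> r j / ln (1 + t * c j)" by simp
    qed
  qed
  ultimately show ?thesis by (rule filterlim_at_top_mono)
qed

lemma sum_inverse_ln_continuous_on:
  fixes A :: "'u set" and r c :: "'u \<Rightarrow> real"
  assumes "\<And>j. j \<in> A \<Longrightarrow> c j > 0"
  shows "continuous_on {0<..} (\<lambda>t. \<Sum>j\<in>A. r j / ln (1 + t * c j))"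
proof -
  have "0 < 1 + t * c j \<and> ln (1 + t * c j) \<noteq> 0" if "t \<in> {0<..}" "j \<in> A" for t j
    using that assms[of j] by (simp add: add_pos_pos)
  then show ?thesis by (intro continuous_intros) force+
qed

lemma sum_inverse_ln_eq_unique:
  fixes A :: "'u set" and r c :: "'u \<Rightarrow> real" and y :: real
  assumes fin: "finite A" and ne: "A \<noteq> {}" and r_pos: "\<And>j. j \<in> A \<Longrightarrow> r j > 0"
    and c_pos: "\<And>j. j \<in> A \<Longrightarrow> c j > 0" and "y > 0"
  shows "\<exists>!t. t > 0 \<and> y = (\<Sum>j\<in>A. r j / ln (1 + t * c j))"
proof -
  define F where "F t = (\<Sum>j\<in>A. r j / ln (1 + t * c j))" for t
  have "filterlim F at_top (at_right 0)"
    using sum_inverse_ln_at_right_zero[OF assms(1-4)] by (simp add: F_def[abs_def])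
  then have "eventually (\<lambda>t. F t > y \<and> t > 0) (at_right 0)"
    using eventually_at_right_less[of 0] by (simp add: filterlim_at_top_dense eventually_conj_iff)
  then obtain a where a: "F a > y" "a > 0"
    using eventually_happens'[OF trivial_limit_at_right_real] by blast
  have "(F \<longlongrightarrow> 0) at_top"
    using sum_inverse_ln_tendsto_zero[of A c r] c_pos by (simp add: F_def[abs_def])
  then have "eventually (\<lambda>t. F t < y \<and> t > a) at_top"
    using order_tendstoD(2)[of F 0 at_top y] \<open>y > 0\<close> eventually_gt_at_top[of a]
    by (simp add: eventually_conj_iff)
  then obtain b where b: "F b < y" "b > a" by (auto simp: eventually_at_top_linorder)
  have "continuous_on {a..b} F"
  proof (rule continuous_on_subset)
    show "continuous_on {0<..} F"
      using sum_inverse_ln_continuous_on[of A c r] c_pos by (simp add: F_def[abs_def])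
  qed (use a(2) in auto)
  then obtain t where t: "a \<le> t" "t \<le> b" "F t = y"
    using IVT2'[of F b y a] a b by auto
  have antimono: "F t < F s" if "0 < s" "s < t" for s t
    using sum_inverse_ln_strict_antimono[OF assms(1-4) that] by (simp add: F_def)
  have "s = t" if "s > 0" "y = F s" for s
  proof (cases s t rule: linorder_cases)
    case less
    with antimono[of s t] that t(3) show ?thesis by linarith
  next
    case greater
    with antimono[of t s] that t(3) t(1) a(2) show ?thesis by linarith
  qed
  with t a(2) show ?thesis unfolding F_def[symmetric] by (intro ex1I[of _ t]) auto
qed

lemma fcell_fun_upd_self:
  fixes J :: "'n::finite \<Rightarrow> 'u set" and g :: "'n \<Rightarrow> 'u \<Rightarrow> real"
    and p x :: "'n \<Rightarrow> real" and sigma2 :: real and i :: 'n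
  defines "D \<equiv> \<lambda>j. (\<Sum>k\<in>UNIV - {i}. p k * g k j * x k) + sigma2"
  shows "fcell J g sigma2 i x r (p(i := t)) = (\<Sum>j\<in>J i. r i j / ln (1 + t * (g i j / D j)))"
proof -
  have "(\<Sum>k\<in>UNIV - {i}. (p(i := t)) k * g k j * x k) = (\<Sum>k\<in>UNIV - {i}. p k * g k j * x k)"
    for j by (rule sum.cong) auto
  then show ?thesis by (simp add: fcell_def D_def)
qed

lemma fcell_eq_unique_power:
  fixes J :: "'n::finite \<Rightarrow> 'u set"
  assumes "finite (J i)" "J i \<noteq> {}" "\<And>k j. g k j > 0" "sigma2 > 0" "\<And>k. x k > 0"
    and "\<And>j. j \<in> J i \<Longrightarrow> r i j > 0" and p_pos: "\<And>k. k \<noteq> i \<Longrightarrow> p k > 0"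
  shows "\<exists>!t. t > 0 \<and> x i = fcell J g sigma2 i x r (p(i := t))"
proof -
  define D where "D j = (\<Sum>k\<in>UNIV - {i}. p k * g k j * x k) + sigma2" for j
  have "0 \<le> (\<Sum>k\<in>UNIV - {i}. p k * g k j * x k)" for j
    using p_pos assms(3,5) by (intro sum_nonneg) (simp add: less_imp_le)
  then have "D j > 0" for j using assms(4) by (simp add: D_def add_nonneg_pos)
  then have "\<exists>!t. t > 0 \<and> x i = (\<Sum>j\<in>J i. r i j / ln (1 + t * (g i j / D j)))"
    using assms by (intro sum_inverse_ln_eq_unique) auto
  then show ?thesis by (simp add: fcell_fun_upd_self D_def)
qed

theorem lemma4:
  fixes J :: "'n::finite \<Rightarrow> 'u set"
    and g :: "'n \<Rightarrow> 'u \<Rightarrow> real"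
    and sigma2 :: real
    and x :: "'n \<Rightarrow> real"
    and r :: "'n \<Rightarrow> 'u \<Rightarrow> real"
  assumes J_fin: "\<And>i. finite (J i)"
    and J_ne: "\<And>i. J i \<noteq> {}"
    and J_disj: "\<And>i i'. i \<noteq> i' \<Longrightarrow> J i \<inter> J i' = {}"
    and g_pos: "\<And>k j. g k j > 0"
    and sigma_pos: "sigma2 > 0"
    and x_pos: "\<And>i. x i > 0"
    and r_pos: "\<And>i j. j \<in> J i \<Longrightarrow> r i j > 0"
  shows "\<exists>h :: 'n \<Rightarrow> ('n \<Rightarrow> real) \<Rightarrow> real.
           (\<forall>i. \<forall>p. (\<forall>k. k \<noteq> i \<longrightarrow> p k > 0) \<longrightarrow>
                 h i p > 0
               \<and> x i = fcell J g sigma2 i x r (p(i := h i p))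
               \<and> (\<forall>t. t > 0 \<and> x i = fcell J g sigma2 i x r (p(i := t)) \<longrightarrow> t = h i p))
         \<and> (\<forall>i. \<forall>p q. (\<forall>k. k \<noteq> i \<longrightarrow> p k = q k) \<longrightarrow> h i p = h i q)
         \<and> (\<forall>p. (\<forall>k. p k > 0) \<and> (\<forall>i. x i = fcell J g sigma2 i x r p)
               \<longrightarrow> (\<forall>i. p i = h i p))"
proof -
  define h where "h i p = (THE t. t > 0 \<and> x i = fcell J g sigma2 i x r (p(i := t)))" for i p
  have unique: "\<exists>!t. t > 0 \<and> x i = fcell J g sigma2 i x r (p(i := t))"
    if "\<forall>k. k \<noteq> i \<longrightarrow> p k > 0" for i p
    using that by (intro fcell_eq_unique_power) (simp_all add: assms)
  have h_spec: "h i p > 0 \<and> x i = fcell J g sigma2 i x r (p(i := h i p))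
      \<and> (\<forall>t. t > 0 \<and> x i = fcell J g sigma2 i x r (p(i := t)) \<longrightarrow> t = h i p)"
    if "\<forall>k. k \<noteq> i \<longrightarrow> p k > 0" for i p
    using theI'[OF unique[OF that]] unique[OF that] unfolding h_def by blast
  have "h i p = h i q" if "\<forall>k. k \<noteq> i \<longrightarrow> p k = q k" for i and p q :: "'n \<Rightarrow> real"
  proof -
    from that have "p(i := t) = q(i := t)" for t by auto
    then show ?thesis by (simp add: h_def)
  qed
  moreover have "p i = h i p"
    if "\<forall>k. p k > 0" "\<forall>i. x i = fcell J g sigma2 i x r p" for p i
    using h_spec[of i p] that by (metis fun_upd_triv)
  ultimately show ?thesis using h_spec by blast
qed

end
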